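(* Let $n>4$ and let $L$ and ${}^*L=e^{\sigma(x)}L+\beta$ be as in the context. Define $\eta_{hijk}=\frac1L\big[S_{hijk}-(h_{jh}M_{ik}+h_{ik}M_{jh}-h_{hk}M_{ij}-h_{ij}M_{hk})\big]$ and ${}^*\eta_{hijk}$ by the same formula built from ${}^*L$. Then ${}^*\eta_{hijk}=e^{\sigma(x)}\eta_{hijk}$.
   Context: $M$ is a smooth manifold of dimension $n$ with local coordinates $(x^i)$ and induced fiber coordinates $(y^i)$ on $TM$. $L(x,y)$ is a Finsler metric: positive and smooth for $y\neq0$, positively homogeneous of degree 1 in $y$, with positive definite fundamental tensor $g_{ij}=\frac12\frac{\partial^2L^2}{\partial y^i\partial y^j}$ and inverse $g^{ij}$. $\sigma(x)$ is a smooth function on $M$ and $\beta(x,y)=b_i(x)y^i$ is a 1-form; the conformal $\beta$-change is ${}^*L=e^{\sigma(x)}L+\beta$, assumed to be again a Finsler metric. Notation: $l_i=\partial L/\partial y^i$, $h_{ij}=g_{ij}-l_il_j$, $c_{ijk}=\frac12\partial g_{ij}/\partial y^k$, $c_h{}^r{}_k=g^{rs}c_{hsk}$, $S_{hijk}=c_{ijr}c_h{}^r{}_k-c_{ikr}c_h{}^r{}_j$, $S_{ik}=g^{hj}S_{hijk}$, $S=g^{ik}S_{ik}$, and $M_{ij}=\frac{1}{n-3}\big[S_{ij}-\frac{S\,h_{ij}}{2(n-2)}\big]$. Quantities built from ${}^*L$ by the same formulas (using ${}^*g_{ij}$ and its inverse ${}^*g^{ij}$) are denoted with a left asterisk. 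*)

theory Defs
  imports "HOL-Analysis.Analysis"
begin

text \<open>Fiber coordinates y on T_xM are modelled by real^'n; a Finsler metric at a
point x is a function F :: real^'n => real of y. All objects in the statement
involve only y-derivatives at fixed x.\<close>

definition pd :: "'n::finite \<Rightarrow> (real^'n \<Rightarrow> real) \<Rightarrow> real^'n \<Rightarrow> real" where
  "pd i f y = deriv (\<lambda>t. f (y + t *\<^sub>R axis i 1)) 0"

fun iter_pd :: "'n::finite list \<Rightarrow> (real^'n \<Rightarrow> real) \<Rightarrow> real^'n \<Rightarrow> real" where
  "iter_pd [] f = f"
| "iter_pd (i # is) f = pd i (iter_pd is f)"

definition smooth_off0 :: "(real^'n::finite \<Rightarrow> real) \<Rightarrow> bool" where
  "smooth_off0 f \<longleftrightarrow> (\<forall>is y. y \<noteq> 0 \<longrightarrow> iter_pd is f differentiable (at y))"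

definition fund :: "(real^'n::finite \<Rightarrow> real) \<Rightarrow> real^'n \<Rightarrow> 'n \<Rightarrow> 'n \<Rightarrow> real" where
  "fund F y i j = pd i (pd j (\<lambda>v. (F v)^2)) y / 2"

definition fund_inv :: "(real^'n::finite \<Rightarrow> real) \<Rightarrow> real^'n \<Rightarrow> 'n \<Rightarrow> 'n \<Rightarrow> real" where
  "fund_inv F y i j = matrix_inv (\<chi> a b. fund F y a b) $ i $ j"

definition finsler :: "(real^'n::finite \<Rightarrow> real) \<Rightarrow> bool" where
  "finsler F \<longleftrightarrow> smooth_off0 F
     \<and> (\<forall>y. y \<noteq> 0 \<longrightarrow> F y > 0)
     \<and> (\<forall>y t. t > 0 \<longrightarrow> F (t *\<^sub>R y) = t * F y)
     \<and> (\<forall>y. y \<noteq> 0 \<longrightarrow> (\<forall>\<xi>. \<xi> \<noteq> 0 \<longrightarrow> (\<Sum>i\<in>UNIV. \<Sum>j\<in>UNIV. fund F y i j * \<xi>$i * \<xi>$j) > 0))"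

definition lvec :: "(real^'n::finite \<Rightarrow> real) \<Rightarrow> real^'n \<Rightarrow> 'n \<Rightarrow> real" where
  "lvec F y i = pd i F y"

definition hang :: "(real^'n::finite \<Rightarrow> real) \<Rightarrow> real^'n \<Rightarrow> 'n \<Rightarrow> 'n \<Rightarrow> real" where
  "hang F y i j = fund F y i j - lvec F y i * lvec F y j"

definition cart :: "(real^'n::finite \<Rightarrow> real) \<Rightarrow> real^'n \<Rightarrow> 'n \<Rightarrow> 'n \<Rightarrow> 'n \<Rightarrow> real" where
  "cart F y i j k = pd k (\<lambda>v. fund F v i j) y / 2"

definition cart_up :: "(real^'n::finite \<Rightarrow> real) \<Rightarrow> real^'n \<Rightarrow> 'n \<Rightarrow> 'n \<Rightarrow> 'n \<Rightarrow> real" where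
  "cart_up F y h r k = (\<Sum>s\<in>UNIV. fund_inv F y r s * cart F y h s k)"

definition Scurv :: "(real^'n::finite \<Rightarrow> real) \<Rightarrow> real^'n \<Rightarrow> 'n \<Rightarrow> 'n \<Rightarrow> 'n \<Rightarrow> 'n \<Rightarrow> real" where
  "Scurv F y h i j k = (\<Sum>r\<in>UNIV. cart F y i j r * cart_up F y h r k - cart F y i k r * cart_up F y h r j)"

definition Sric :: "(real^'n::finite \<Rightarrow> real) \<Rightarrow> real^'n \<Rightarrow> 'n \<Rightarrow> 'n \<Rightarrow> real" where
  "Sric F y i k = (\<Sum>h\<in>UNIV. \<Sum>j\<in>UNIV. fund_inv F y h j * Scurv F y h i j k)"

definition Sscal :: "(real^'n::finite \<Rightarrow> real) \<Rightarrow> real^'n \<Rightarrow> real" where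
  "Sscal F y = (\<Sum>i\<in>UNIV. \<Sum>k\<in>UNIV. fund_inv F y i k * Sric F y i k)"

definition Mten :: "(real^'n::finite \<Rightarrow> real) \<Rightarrow> real^'n \<Rightarrow> 'n \<Rightarrow> 'n \<Rightarrow> real" where
  "Mten F y i j = (1 / (real CARD('n) - 3)) *
     (Sric F y i j - Sscal F y * hang F y i j / (2 * (real CARD('n) - 2)))"

definition eta :: "(real^'n::finite \<Rightarrow> real) \<Rightarrow> real^'n \<Rightarrow> 'n \<Rightarrow> 'n \<Rightarrow> 'n \<Rightarrow> 'n \<Rightarrow> real" where
  "eta F y h i j k = (1 / F y) * (Scurv F y h i j k
      - (hang F y j h * Mten F y i k + hang F y i k * Mten F y j h
         - hang F y h k * Mten F y i j - hang F y i j * Mten F y h k))"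

end

theory Submission
  imports Defs
begin

text \<open>
  Fix \<open>x\<close> and \<open>y \<noteq> 0\<close> and write \<open>G = c F + \<beta>\<close> with \<open>c = exp (\<sigma> x)\<close>. Since \<open>\<beta>\<close> is linear in \<open>y\<close>,
  all \<open>y\<close>-derivatives of \<open>G\<close> of order at least two are \<open>c\<close> times those of \<open>F\<close>. Hence the
  angular metrics satisfy \<open>h\<^sup>G = \<rho> h\<close> with \<open>\<rho> = c G / F\<close>, and \<open>C\<^sup>G - \<rho> C\<close> is \<open>c / 2F\<close>
  times the symmetrisation of \<open>m \<otimes> h\<close>, where \<open>m = l\<^sup>G - (G / F) l\<close> is indicatory.
  On indicatory tensors the inverse metric of \<open>G\<close> acts as \<open>\<rho>\<^sup>-\<^sup>1\<close> times that of \<open>F\<close>.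
  Consequently \<open>S\<^sup>G = \<rho> S + h \<odot> Y\<close> for an indicatory \<open>Y\<close> (\<open>\<odot>\<close> the Kulkarni--Nomizu
  product), and contracting gives \<open>M\<^sup>G = M - Y / \<rho>\<close> as soon as \<open>n > 3\<close>. In
  \<open>\<eta> = (S + h \<odot> M) / L\<close> the two contributions of \<open>Y\<close> cancel, leaving
  \<open>\<eta>\<^sup>G = (\<rho> F / G) \<eta> = c \<eta>\<close>.
\<close>

section \<open>Partial derivatives on \<open>real^'n\<close>\<close>

lemma has_real_derivative_along_line:
  fixes f :: "'a::real_normed_vector \<Rightarrow> real"
  assumes "(f has_derivative f') (at (p + s *\<^sub>R e))"
  shows "((\<lambda>t. f (p + t *\<^sub>R e)) has_real_derivative f' e) (at s)"
proof -
  have "((\<lambda>t. p + t *\<^sub>R e) has_derivative (\<lambda>t. t *\<^sub>R e)) (at s)"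
    by (auto intro!: derivative_eq_intros)
  from has_derivative_compose[OF this assms]
  have "((\<lambda>t. f (p + t *\<^sub>R e)) has_derivative (\<lambda>t. f' (t *\<^sub>R e))) (at s)"
    by (simp add: o_def)
  moreover have "(\<lambda>t. f' (t *\<^sub>R e)) = (*) (f' e)"
    using has_derivative_linear[OF assms] by (auto simp: linear_cmul mult.commute)
  ultimately show ?thesis
    unfolding has_field_derivative_def by simp
qed

lemma pd_eq_derivative:
  assumes "(f has_derivative f') (at v)"
  shows "pd i f v = f' (axis i 1)"
  unfolding pd_def
  by (rule DERIV_imp_deriv, rule has_real_derivative_along_line) (use assms in simp)

lemma sum_axis_mult [simp]: "(\<Sum>k\<in>UNIV. axis i (1::real) $ k * a k) = a i"
proof -
  have "(\<Sum>k\<in>UNIV. axis i (1::real) $ k * a k) = (\<Sum>k\<in>UNIV. if k = i then a k else 0)"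
    by (rule sum.cong) (auto simp: axis_def)
  then show ?thesis by simp
qed

lemma has_derivative_pd:
  fixes f :: "real^'n::finite \<Rightarrow> real"
  assumes "f differentiable (at v)"
  shows "(f has_derivative (\<lambda>h. \<Sum>k\<in>UNIV. h$k * pd k f v)) (at v)"
proof -
  obtain f' where f': "(f has_derivative f') (at v)"
    using assms unfolding differentiable_def by blast
  have lin: "linear f'" using f' has_derivative_linear by blast
  have "f' h = (\<Sum>k\<in>UNIV. h$k * pd k f v)" for h
  proof -
    have "f' h = f' (\<Sum>k\<in>UNIV. (h$k) *s axis k 1)" by (simp add: basis_expansion)
    also have "\<dots> = (\<Sum>k\<in>UNIV. h$k * f' (axis k 1))"
      by (simp add: linear_sum[OF lin] scalar_mult_eq_scaleR linear_cmul[OF lin])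
    finally show ?thesis by (simp add: pd_eq_derivative[OF f'])
  qed
  then have "f' = (\<lambda>h. \<Sum>k\<in>UNIV. h$k * pd k f v)" by auto
  with f' show ?thesis by simp
qed

lemma has_real_derivative_pd:
  assumes "f differentiable (at (p + s *\<^sub>R axis i 1))"
  shows "((\<lambda>t. f (p + t *\<^sub>R axis i 1)) has_real_derivative pd i f (p + s *\<^sub>R axis i 1)) (at s)"
  using has_real_derivative_along_line[OF has_derivative_pd[OF assms]] by simp

lemma pd_cong_open:
  assumes "open S" "v \<in> S" "\<And>w. w \<in> S \<Longrightarrow> f w = g w"
  shows "pd i f v = pd i g v"
proof -
  obtain r where r: "r > 0" "ball v r \<subseteq> S" using assms(1,2) open_contains_ball by blast
  have "eventually (\<lambda>t. f (v + t *\<^sub>R axis i 1) = g (v + t *\<^sub>R axis i 1)) (nhds (0::real))"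
    unfolding eventually_nhds_metric
  proof (intro exI[of _ r] conjI allI impI)
    fix t :: real assume "dist t 0 < r"
    then have "v + t *\<^sub>R axis i 1 \<in> ball v r" by (simp add: dist_norm)
    then show "f (v + t *\<^sub>R axis i 1) = g (v + t *\<^sub>R axis i 1)" using r assms(3) by blast
  qed (use r in auto)
  then show ?thesis unfolding pd_def by (rule deriv_cong_ev) simp
qed

lemma pd_cong_nonzero:
  assumes "v \<noteq> 0" "\<And>w. w \<noteq> 0 \<Longrightarrow> f w = g w"
  shows "pd i f v = pd i g v"
  by (rule pd_cong_open[of "- {0}"]) (use assms in auto)

lemma pd_add:
  "f differentiable (at v) \<Longrightarrow> g differentiable (at v) \<Longrightarrow>
    pd i (\<lambda>w. f w + g w) v = pd i f v + pd i g v"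
  by (subst pd_eq_derivative[OF has_derivative_add[OF has_derivative_pd has_derivative_pd]])
    (auto simp: pd_eq_derivative)

lemma pd_mult:
  "f differentiable (at v) \<Longrightarrow> g differentiable (at v) \<Longrightarrow>
    pd i (\<lambda>w. f w * g w) v = pd i f v * g v + f v * pd i g v"
  by (subst pd_eq_derivative[OF has_derivative_mult[OF has_derivative_pd has_derivative_pd]])
    (auto simp: pd_eq_derivative)

lemma pd_cmult: "f differentiable (at v) \<Longrightarrow> pd i (\<lambda>w. c * f w) v = c * pd i f v"
  by (subst pd_eq_derivative[OF has_derivative_mult_right[OF has_derivative_pd]])
    (auto simp: pd_eq_derivative)

lemma pd_const: "pd i (\<lambda>w. c) v = 0"
  by (subst pd_eq_derivative[OF has_derivative_const]) simp

lemma pd_inner: "pd i (\<lambda>w. b \<bullet> w) v = b $ i"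
proof -
  have "((\<lambda>w. b \<bullet> w) has_derivative (\<lambda>w. b \<bullet> w)) (at v)"
    by (auto intro!: derivative_eq_intros)
  then show ?thesis by (simp add: pd_eq_derivative inner_axis)
qed

lemma pd_square: "f differentiable (at v) \<Longrightarrow> pd i (\<lambda>w. (f w)\<^sup>2) v = 2 * f v * pd i f v"
  using pd_mult[of f v f i] by (simp add: power2_eq_square)

lemma pd_scale:
  assumes "f differentiable (at (t *\<^sub>R v))"
  shows "pd i (\<lambda>w. f (t *\<^sub>R w)) v = t * pd i f (t *\<^sub>R v)"
proof -
  have "((\<lambda>w. t *\<^sub>R w) has_derivative (\<lambda>h. t *\<^sub>R h)) (at v)"
    by (auto intro!: derivative_eq_intros)
  from has_derivative_compose[OF this has_derivative_pd[OF assms]]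
  have "((\<lambda>w. f (t *\<^sub>R w)) has_derivative (\<lambda>h. \<Sum>k\<in>UNIV. (t *\<^sub>R h)$k * pd k f (t *\<^sub>R v))) (at v)"
    by (simp add: o_def)
  then show ?thesis
    by (simp add: pd_eq_derivative mult.assoc flip: sum_distrib_left)
qed

lemma pd_homogeneous:
  assumes hom: "\<And>w. w \<noteq> 0 \<Longrightarrow> f (t *\<^sub>R w) = c * f w"
    and df: "\<And>w. w \<noteq> 0 \<Longrightarrow> f differentiable (at w)"
    and v: "v \<noteq> 0" and t: "t > 0"
  shows "pd i f (t *\<^sub>R v) = c / t * pd i f v"
proof -
  have "t * pd i f (t *\<^sub>R v) = pd i (\<lambda>w. f (t *\<^sub>R w)) v"
    using pd_scale[of f t v i] df[of "t *\<^sub>R v"] v t by simp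
  also have "\<dots> = pd i (\<lambda>w. c * f w) v"
    by (rule pd_cong_nonzero) (use v hom in auto)
  also have "\<dots> = c * pd i f v"
    using pd_cmult df v by blast
  finally show ?thesis using t by (simp add: field_simps)
qed

lemma euler_homogeneous:
  assumes df: "f differentiable (at w)" and hom: "\<And>t. t > 0 \<Longrightarrow> f (t *\<^sub>R w) = \<phi> t * f w"
    and d\<phi>: "(\<phi> has_real_derivative d) (at 1)"
  shows "(\<Sum>k\<in>UNIV. w$k * pd k f w) = d * f w"
proof -
  have "((\<lambda>t. t *\<^sub>R w) has_derivative (\<lambda>t. t *\<^sub>R w)) (at 1)"
    by (auto intro!: derivative_eq_intros)
  moreover have "(f has_derivative (\<lambda>h. \<Sum>k\<in>UNIV. h$k * pd k f w)) (at (1 *\<^sub>R w))"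
    using has_derivative_pd[OF df] by simp
  ultimately have "((\<lambda>t. f (t *\<^sub>R w)) has_derivative (\<lambda>t. \<Sum>k\<in>UNIV. (t *\<^sub>R w)$k * pd k f w)) (at 1)"
    by (rule has_derivative_compose[unfolded o_def])
  moreover have "(\<lambda>t. \<Sum>k\<in>UNIV. (t *\<^sub>R w)$k * pd k f w) = (*) (\<Sum>k\<in>UNIV. w$k * pd k f w)"
    by (auto simp: sum_distrib_left algebra_simps)
  ultimately have "((\<lambda>t. f (t *\<^sub>R w)) has_real_derivative (\<Sum>k\<in>UNIV. w$k * pd k f w)) (at 1)"
    by (simp add: has_field_derivative_def)
  moreover have "((\<lambda>t. \<phi> t * f w) has_real_derivative d * f w) (at 1)"
    using DERIV_mult[OF d\<phi> DERIV_const[of "f w"]] by simp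
  then have "((\<lambda>t. f (t *\<^sub>R w)) has_real_derivative d * f w) (at 1)"
    by (rule has_field_derivative_transform_within_open[of _ _ _ "{0<..}"]) (auto simp: hom)
  ultimately show ?thesis by (rule DERIV_unique)
qed

definition mixed_difference :: "(real^'n::finite \<Rightarrow> real) \<Rightarrow> real^'n \<Rightarrow> 'n \<Rightarrow> 'n \<Rightarrow> real \<Rightarrow> real"
  where "mixed_difference f v i j t =
    f (v + t *\<^sub>R axis i 1 + t *\<^sub>R axis j 1) - f (v + t *\<^sub>R axis i 1) - f (v + t *\<^sub>R axis j 1) + f v"

lemma mixed_difference_commute: "mixed_difference f v i j t = mixed_difference f v j i t"
  unfolding mixed_difference_def by (simp add: algebra_simps)

lemma mixed_difference_mean_value:
  fixes f :: "real^'n::finite \<Rightarrow> real"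
  assumes t: "t > 0" and df: "\<And>w. w \<in> cball v (2 * t) \<Longrightarrow> f differentiable (at w)"
  obtains z where "0 < z" "z < t" "mixed_difference f v i j t
    = t * (pd i f (v + t *\<^sub>R axis j 1 + z *\<^sub>R axis i 1) - pd i f (v + z *\<^sub>R axis i 1))"
proof -
  define u where "u s = f (v + t *\<^sub>R axis j 1 + s *\<^sub>R axis i 1) - f (v + s *\<^sub>R axis i 1)" for s
  have der: "(u has_real_derivative
      pd i f (v + t *\<^sub>R axis j 1 + s *\<^sub>R axis i 1) - pd i f (v + s *\<^sub>R axis i 1)) (at s)"
    if s: "0 \<le> s" "s \<le> t" for s
  proof -
    have "norm (t *\<^sub>R axis j 1 + s *\<^sub>R axis i 1 :: real^'n) \<le> 2 * t"
      using norm_triangle_ineq[of "t *\<^sub>R axis j 1 :: real^'n" "s *\<^sub>R axis i 1"] s t by simp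
    then have "v + t *\<^sub>R axis j 1 + s *\<^sub>R axis i 1 \<in> cball v (2 * t)"
      "v + s *\<^sub>R axis i 1 \<in> cball v (2 * t)"
      using s t norm_minus_cancel[of "t *\<^sub>R axis j 1 + s *\<^sub>R axis i 1 :: real^'n"]
      by (auto simp: dist_norm add.assoc)
    then show ?thesis
      unfolding u_def by (intro DERIV_diff has_real_derivative_pd df)
  qed
  obtain z where "0 < z" "z < t"
    "u t - u 0 = t * (pd i f (v + t *\<^sub>R axis j 1 + z *\<^sub>R axis i 1) - pd i f (v + z *\<^sub>R axis i 1))"
    using MVT2[OF t der] by auto
  moreover have "u t - u 0 = mixed_difference f v i j t"
    unfolding u_def mixed_difference_def by (simp add: algebra_simps)
  ultimately show ?thesis using that by simp
qed

lemma mixed_difference_remainder: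
  fixes f p D :: "real^'n::finite \<Rightarrow> real" and v :: "real^'n"
  defines "E \<equiv> \<lambda>w. p (v + w) - p v - D w"
  assumes "linear D" "t \<noteq> 0"
    and "mixed_difference f v i j t
      = t * (p (v + t *\<^sub>R axis j 1 + z *\<^sub>R axis i 1) - p (v + z *\<^sub>R axis i 1))"
  shows "mixed_difference f v i j t / t\<^sup>2 - D (axis j 1)
    = (E (t *\<^sub>R axis j 1 + z *\<^sub>R axis i 1) - E (z *\<^sub>R axis i 1)) / t"
proof -
  have "mixed_difference f v i j t / t\<^sup>2
      = (p (v + t *\<^sub>R axis j 1 + z *\<^sub>R axis i 1) - p (v + z *\<^sub>R axis i 1)) / t"
    using assms(3) unfolding assms(4) by (simp add: power2_eq_square)
  moreover have "D (axis j 1) = (D (t *\<^sub>R axis j 1 + z *\<^sub>R axis i 1) - D (z *\<^sub>R axis i 1)) / t"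
    using assms(2,3) by (simp add: linear_add linear_cmul)
  ultimately have "mixed_difference f v i j t / t\<^sup>2 - D (axis j 1)
      = ((p (v + t *\<^sub>R axis j 1 + z *\<^sub>R axis i 1) - p (v + z *\<^sub>R axis i 1))
        - (D (t *\<^sub>R axis j 1 + z *\<^sub>R axis i 1) - D (z *\<^sub>R axis i 1))) / t"
    by (simp add: diff_divide_distrib)
  then show ?thesis unfolding E_def by (simp add: add.assoc algebra_simps)
qed

lemma mixed_difference_tendsto:
  fixes f :: "real^'n::finite \<Rightarrow> real"
  assumes S: "open S" "v \<in> S" and df: "\<And>w. w \<in> S \<Longrightarrow> f differentiable (at w)"
    and D: "(pd i f has_derivative D) (at v)"
  shows "((\<lambda>t. mixed_difference f v i j t / t\<^sup>2) \<longlongrightarrow> D (axis j 1)) (at_right 0)"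
  unfolding tendsto_iff eventually_at_right_field
proof (intro allI impI)
  fix e :: real assume e: "e > 0"
  define E where "E w = pd i f (v + w) - pd i f v - D w" for w
  obtain r where r: "r > 0" "ball v r \<subseteq> S" using S open_contains_ball by blast
  have "e / 4 > 0" using e by simp
  then obtain d where d: "d > 0"
    "\<And>w. norm (w - v) < d \<Longrightarrow> norm (pd i f w - pd i f v - D (w - v)) \<le> e / 4 * norm (w - v)"
    using D unfolding has_derivative_at_alt by blast
  have E: "\<bar>E w\<bar> \<le> e / 4 * s" if "norm w \<le> s" "s < d" for w s
  proof -
    have "\<bar>E w\<bar> \<le> e / 4 * norm w" using d(2)[of "v + w"] that unfolding E_def by simp
    also have "\<dots> \<le> e / 4 * s" using that e by (intro mult_left_mono) auto
    finally show ?thesis .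
  qed
  show "\<exists>b>0. \<forall>t>0. t < b \<longrightarrow> dist (mixed_difference f v i j t / t\<^sup>2) (D (axis j 1)) < e"
  proof (intro exI[of _ "min r d / 2"] conjI allI impI)
    fix t :: real assume t: "t > 0" "t < min r d / 2"
    have "cball v (2 * t) \<subseteq> ball v r" using t by (simp add: cball_subset_ball_iff)
    with r df have "\<And>w. w \<in> cball v (2 * t) \<Longrightarrow> f differentiable (at w)" by blast
    then obtain z where z: "0 < z" "z < t" and \<Delta>: "mixed_difference f v i j t
        = t * (pd i f (v + t *\<^sub>R axis j 1 + z *\<^sub>R axis i 1) - pd i f (v + z *\<^sub>R axis i 1))"
      by (rule mixed_difference_mean_value[OF t(1)])
    have "norm (t *\<^sub>R axis j 1 + z *\<^sub>R axis i 1 :: real^'n) \<le> 2 * t"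
      using norm_triangle_ineq[of "t *\<^sub>R axis j 1 :: real^'n" "z *\<^sub>R axis i 1"] z by simp
    from E[OF this] have "\<bar>E (t *\<^sub>R axis j 1 + z *\<^sub>R axis i 1)\<bar> \<le> e / 4 * (2 * t)"
      using t by simp
    moreover have "\<bar>E (z *\<^sub>R axis i 1)\<bar> \<le> e / 4 * t"
      using z t by (intro E) auto
    ultimately have "\<bar>E (t *\<^sub>R axis j 1 + z *\<^sub>R axis i 1) - E (z *\<^sub>R axis i 1)\<bar> \<le> 3 * e / 4 * t"
      by linarith
    moreover have "mixed_difference f v i j t / t\<^sup>2 - D (axis j 1)
        = (E (t *\<^sub>R axis j 1 + z *\<^sub>R axis i 1) - E (z *\<^sub>R axis i 1)) / t"
      using mixed_difference_remainder[OF _ _ \<Delta>] has_derivative_linear[OF D] t unfolding E_def by simp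
    ultimately have "\<bar>mixed_difference f v i j t / t\<^sup>2 - D (axis j 1)\<bar> \<le> 3 * e / 4"
      using t by (simp add: abs_divide pos_divide_le_eq)
    then show "dist (mixed_difference f v i j t / t\<^sup>2) (D (axis j 1)) < e"
      using e by (simp add: dist_real_def)
  qed (use r d in auto)
qed

theorem pd_commute:
  fixes f :: "real^'n::finite \<Rightarrow> real"
  assumes "open S" "v \<in> S" "\<And>w. w \<in> S \<Longrightarrow> f differentiable (at w)"
    and "pd i f differentiable (at v)" "pd j f differentiable (at v)"
  shows "pd j (pd i f) v = pd i (pd j f) v"
proof -
  obtain Di where Di: "(pd i f has_derivative Di) (at v)"
    using assms(4) unfolding differentiable_def by blast
  obtain Dj where Dj: "(pd j f has_derivative Dj) (at v)"
    using assms(5) unfolding differentiable_def by blast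
  have "((\<lambda>t. mixed_difference f v i j t / t\<^sup>2) \<longlongrightarrow> Di (axis j 1)) (at_right 0)"
    by (rule mixed_difference_tendsto[OF assms(1-3) Di])
  moreover have "((\<lambda>t. mixed_difference f v i j t / t\<^sup>2) \<longlongrightarrow> Dj (axis i 1)) (at_right 0)"
    using mixed_difference_tendsto[OF assms(1-3) Dj, of i] by (simp add: mixed_difference_commute)
  ultimately have "Di (axis j 1) = Dj (axis i 1)"
    by (rule tendsto_unique[rotated]) simp
  then show ?thesis by (simp add: pd_eq_derivative[OF Di] pd_eq_derivative[OF Dj])
qed

section \<open>Consequences of the Finsler axioms\<close>

context
  fixes F :: "real^'n::finite \<Rightarrow> real"
  assumes finsler: "finsler F"
begin

lemma finsler_iter_pd_differentiable: "v \<noteq> 0 \<Longrightarrow> iter_pd is F differentiable (at v)"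
  using finsler unfolding finsler_def smooth_off0_def by blast

lemma finsler_differentiable: "v \<noteq> 0 \<Longrightarrow> F differentiable (at v)"
  using finsler_iter_pd_differentiable[of v "[]"] by simp

lemma finsler_pd_differentiable: "v \<noteq> 0 \<Longrightarrow> pd j F differentiable (at v)"
  using finsler_iter_pd_differentiable[of v "[j]"] by simp

lemma finsler_pd2_differentiable: "v \<noteq> 0 \<Longrightarrow> pd i (pd j F) differentiable (at v)"
  using finsler_iter_pd_differentiable[of v "[i, j]"] by simp

lemma finsler_pos: "v \<noteq> 0 \<Longrightarrow> F v > 0"
  using finsler unfolding finsler_def by blast

lemma finsler_homogeneous: "t > 0 \<Longrightarrow> F (t *\<^sub>R v) = t * F v"
  using finsler unfolding finsler_def by blast

lemma finsler_fund_pos_definite: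
  "v \<noteq> 0 \<Longrightarrow> \<xi> \<noteq> 0 \<Longrightarrow> (\<Sum>i\<in>UNIV. \<Sum>j\<in>UNIV. fund F v i j * \<xi>$i * \<xi>$j) > 0"
  using finsler unfolding finsler_def by blast

lemma pd_finsler_homogeneous: "w \<noteq> 0 \<Longrightarrow> t > 0 \<Longrightarrow> pd j F (t *\<^sub>R w) = pd j F w"
  using pd_homogeneous[of F t t, OF finsler_homogeneous finsler_differentiable] by simp

lemma pd2_finsler_homogeneous:
  "w \<noteq> 0 \<Longrightarrow> t > 0 \<Longrightarrow> pd i (pd j F) (t *\<^sub>R w) = 1 / t * pd i (pd j F) w"
  by (rule pd_homogeneous[where c=1]) (auto simp: pd_finsler_homogeneous finsler_pd_differentiable)

lemma finsler_euler: "y \<noteq> 0 \<Longrightarrow> (\<Sum>k\<in>UNIV. y$k * pd k F y) = F y"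
  using euler_homogeneous[of F y "\<lambda>t. t" 1, OF finsler_differentiable finsler_homogeneous] by simp

lemma finsler_euler_pd: "y \<noteq> 0 \<Longrightarrow> (\<Sum>k\<in>UNIV. y$k * pd k (pd j F) y) = 0"
  using euler_homogeneous[of "pd j F" y "\<lambda>t. 1" 0] by (simp add: pd_finsler_homogeneous finsler_pd_differentiable)

lemma finsler_euler_pd2: "y \<noteq> 0 \<Longrightarrow> (\<Sum>k\<in>UNIV. y$k * pd k (pd i (pd j F)) y) = - pd i (pd j F) y"
proof -
  assume y: "y \<noteq> 0"
  have "((\<lambda>t::real. 1 / t) has_real_derivative -1) (at 1)"
    by (auto intro!: derivative_eq_intros)
  with y show ?thesis
    using euler_homogeneous[of "pd i (pd j F)" y "\<lambda>t. 1 / t" "-1"]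
    by (simp add: finsler_pd2_differentiable pd2_finsler_homogeneous)
qed

lemma finsler_pd2_commute: "v \<noteq> 0 \<Longrightarrow> pd i (pd j F) v = pd j (pd i F) v"
  by (rule pd_commute[of "- {0}"]) (auto simp: finsler_differentiable finsler_pd_differentiable)

lemma finsler_pd3_commute: "v \<noteq> 0 \<Longrightarrow> pd k (pd i (pd j F)) v = pd i (pd k (pd j F)) v"
  by (rule pd_commute[of "- {0}"]) (auto simp: finsler_pd_differentiable finsler_pd2_differentiable)

lemma finsler_pd3_swap: "y \<noteq> 0 \<Longrightarrow> pd k (pd i (pd j F)) y = pd j (pd i (pd k F)) y"
proof -
  assume y: "y \<noteq> 0"
  have "pd k (pd i (pd j F)) y = pd k (pd j (pd i F)) y"
    by (rule pd_cong_nonzero) (auto simp: y finsler_pd2_commute)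
  also have "\<dots> = pd j (pd k (pd i F)) y" by (rule finsler_pd3_commute[OF y])
  also have "\<dots> = pd j (pd i (pd k F)) y"
    by (rule pd_cong_nonzero) (auto simp: y finsler_pd2_commute)
  finally show ?thesis .
qed

lemma fund_eq_pd: "v \<noteq> 0 \<Longrightarrow> fund F v i j = pd i F v * pd j F v + F v * pd i (pd j F) v"
proof -
  assume v: "v \<noteq> 0"
  have "pd i (pd j (\<lambda>u. (F u)\<^sup>2)) v = pd i (\<lambda>w. 2 * (F w * pd j F w)) v"
    by (rule pd_cong_nonzero) (use v in \<open>auto simp: pd_square finsler_differentiable\<close>)
  also have "\<dots> = 2 * (pd i F v * pd j F v + F v * pd i (pd j F) v)"
    using v by (simp add: pd_cmult pd_mult finsler_differentiable finsler_pd_differentiable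
        differentiable_mult)
  finally show ?thesis unfolding fund_def by simp
qed

lemma cart_eq_pd: "y \<noteq> 0 \<Longrightarrow> cart F y i j k = (pd k (pd i F) y * pd j F y + pd i F y * pd k (pd j F) y
    + pd k F y * pd i (pd j F) y + F y * pd k (pd i (pd j F)) y) / 2"
proof -
  assume y: "y \<noteq> 0"
  have "pd k (\<lambda>v. fund F v i j) y = pd k (\<lambda>v. pd i F v * pd j F v + F v * pd i (pd j F) v) y"
    by (rule pd_cong_nonzero) (use y fund_eq_pd in auto)
  also have "\<dots> = pd k (pd i F) y * pd j F y + pd i F y * pd k (pd j F) y
    + (pd k F y * pd i (pd j F) y + F y * pd k (pd i (pd j F)) y)"
    using y by (simp add: pd_add pd_mult finsler_differentiable finsler_pd_differentiable
        finsler_pd2_differentiable differentiable_mult)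
  finally show ?thesis unfolding cart_def by simp
qed

lemma hang_eq_pd: "y \<noteq> 0 \<Longrightarrow> hang F y i j = F y * pd i (pd j F) y"
  unfolding hang_def lvec_def using fund_eq_pd by simp

lemma fund_sym: "v \<noteq> 0 \<Longrightarrow> fund F v i j = fund F v j i"
  using fund_eq_pd finsler_pd2_commute by (simp add: mult.commute)

lemma cart_swap12: "y \<noteq> 0 \<Longrightarrow> cart F y i j k = cart F y j i k"
  unfolding cart_def by (subst pd_cong_nonzero[of y "\<lambda>v. fund F v i j" "\<lambda>v. fund F v j i"])
    (auto simp: fund_sym)

lemma cart_swap23: "y \<noteq> 0 \<Longrightarrow> cart F y i j k = cart F y i k j"
proof -
  assume y: "y \<noteq> 0"
  have "pd k (pd i (pd j F)) y = pd j (pd i (pd k F)) y" by (rule finsler_pd3_swap[OF y])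
  moreover have "pd k (pd i F) y = pd i (pd k F) y" "pd k (pd j F) y = pd j (pd k F) y"
    "pd i (pd j F) y = pd j (pd i F) y"
    by (simp_all add: finsler_pd2_commute[OF y])
  ultimately show ?thesis by (simp add: cart_eq_pd[OF y] algebra_simps)
qed

lemma fund_contract_y: "y \<noteq> 0 \<Longrightarrow> (\<Sum>j\<in>UNIV. fund F y i j * y$j) = F y * lvec F y i"
proof -
  assume y: "y \<noteq> 0"
  have "(\<Sum>j\<in>UNIV. fund F y i j * y$j) = pd i F y * (\<Sum>j\<in>UNIV. y$j * pd j F y)
      + F y * (\<Sum>j\<in>UNIV. y$j * pd j (pd i F) y)"
    by (simp add: fund_eq_pd[OF y] finsler_pd2_commute[OF y] sum_distrib_left sum.distrib algebra_simps)
  also have "\<dots> = pd i F y * F y" by (simp add: finsler_euler[OF y] finsler_euler_pd[OF y])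
  finally show ?thesis by (simp add: lvec_def mult.commute)
qed

lemma cart_contract_y: "y \<noteq> 0 \<Longrightarrow> (\<Sum>k\<in>UNIV. cart F y i j k * y$k) = 0"
proof -
  assume y: "y \<noteq> 0"
  have "2 * (\<Sum>k\<in>UNIV. cart F y i j k * y$k) = pd j F y * (\<Sum>k\<in>UNIV. y$k * pd k (pd i F) y)
     + pd i F y * (\<Sum>k\<in>UNIV. y$k * pd k (pd j F) y) + pd i (pd j F) y * (\<Sum>k\<in>UNIV. y$k * pd k F y)
     + F y * (\<Sum>k\<in>UNIV. y$k * pd k (pd i (pd j F)) y)"
    by (simp add: cart_eq_pd[OF y] sum_distrib_left sum.distrib algebra_simps flip: sum_divide_distrib)
  also have "\<dots> = 0"
    by (simp add: finsler_euler[OF y] finsler_euler_pd[OF y] finsler_euler_pd2[OF y])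
  finally show ?thesis by simp
qed

lemma lvec_contract_y: "y \<noteq> 0 \<Longrightarrow> (\<Sum>i\<in>UNIV. lvec F y i * y$i) = F y"
  using finsler_euler by (simp add: lvec_def mult.commute)

lemma fund_invertible: "y \<noteq> 0 \<Longrightarrow> invertible (\<chi> a b. fund F y a b)"
proof -
  assume y: "y \<noteq> 0"
  let ?A = "(\<chi> a b. fund F y a b) :: real^'n^'n"
  have "x = 0" if "?A *v x = 0" for x
  proof -
    have "(\<Sum>i\<in>UNIV. \<Sum>j\<in>UNIV. fund F y i j * x$i * x$j) = (\<Sum>i\<in>UNIV. x$i * (?A *v x)$i)"
      by (simp add: matrix_vector_mult_def sum_distrib_left algebra_simps)
    also have "\<dots> = 0" using that by simp
    finally show "x = 0" using finsler_fund_pos_definite[OF y, of x] by force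
  qed
  then obtain B where "B ** ?A = mat 1" using matrix_left_invertible_ker by blast
  then show ?thesis
    unfolding invertible_def using matrix_left_right_inverse by blast
qed

lemma fund_inv_left: "y \<noteq> 0 \<Longrightarrow> (\<Sum>s\<in>UNIV. fund_inv F y r s * fund F y s k) = (if r = k then 1 else 0)"
proof -
  assume y: "y \<noteq> 0"
  let ?A = "(\<chi> a b. fund F y a b) :: real^'n^'n"
  have "?A ** matrix_inv ?A = mat 1 \<and> matrix_inv ?A ** ?A = mat 1"
    using fund_invertible[OF y] unfolding invertible_def matrix_inv_def by (rule someI_ex)
  from arg_cong[OF conjunct2[OF this], of "\<lambda>M. M $ r $ k"] show ?thesis
    unfolding fund_inv_def by (simp add: matrix_matrix_mult_def mat_def)
qed

end

section \<open>Indicatory tensors at a point\<close>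

lemma sum_delta_mult [simp]:
  fixes f :: "'n::finite \<Rightarrow> real"
  shows "(\<Sum>t\<in>UNIV. f t * (if j = t then 1 else 0)) = f j"
    and "(\<Sum>t\<in>UNIV. f t * (if t = j then 1 else 0)) = f j"
    and "(\<Sum>t\<in>UNIV. (if j = t then 1 else 0) * f t) = f j"
    and "(\<Sum>t\<in>UNIV. (if t = j then 1 else 0) * f t) = f j"
  by (simp_all add: if_distrib if_distribR cong: if_cong)

definition coinner :: "('n::finite \<Rightarrow> 'n \<Rightarrow> real) \<Rightarrow> ('n \<Rightarrow> real) \<Rightarrow> ('n \<Rightarrow> real) \<Rightarrow> real"
  where "coinner gi \<alpha> \<beta> = (\<Sum>r\<in>UNIV. \<Sum>s\<in>UNIV. gi r s * \<alpha> r * \<beta> s)"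

definition indicatory :: "('n::finite \<Rightarrow> real) \<Rightarrow> ('n \<Rightarrow> real) \<Rightarrow> bool"
  where "indicatory y \<alpha> \<longleftrightarrow> (\<Sum>r\<in>UNIV. \<alpha> r * y r) = 0"

lemma coinner_add_left: "coinner gi (\<lambda>r. \<alpha> r + \<gamma> r) \<beta> = coinner gi \<alpha> \<beta> + coinner gi \<gamma> \<beta>"
  by (simp add: coinner_def algebra_simps sum.distrib)

lemma coinner_add_right: "coinner gi \<beta> (\<lambda>r. \<alpha> r + \<gamma> r) = coinner gi \<beta> \<alpha> + coinner gi \<beta> \<gamma>"
  by (simp add: coinner_def algebra_simps sum.distrib)

lemma coinner_scale_left: "coinner gi (\<lambda>r. c * \<alpha> r) \<beta> = c * coinner gi \<alpha> \<beta>"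
  by (simp add: coinner_def sum_distrib_left algebra_simps)

lemma coinner_scale_right: "coinner gi \<beta> (\<lambda>r. c * \<alpha> r) = c * coinner gi \<beta> \<alpha>"
  by (simp add: coinner_def sum_distrib_left algebra_simps)

lemma coinner_sum_left:
  "coinner gi (\<lambda>r. \<Sum>a\<in>UNIV. w a * \<beta> a r) \<alpha> = (\<Sum>a\<in>UNIV. w a * coinner gi (\<beta> a) \<alpha>)"
proof -
  have "coinner gi (\<lambda>r. \<Sum>a\<in>UNIV. w a * \<beta> a r) \<alpha>
      = (\<Sum>r\<in>UNIV. \<Sum>s\<in>UNIV. \<Sum>a\<in>UNIV. w a * (gi r s * \<beta> a r * \<alpha> s))"
    unfolding coinner_def by (simp add: sum_distrib_left sum_distrib_right algebra_simps)
  also have "\<dots> = (\<Sum>r\<in>UNIV. \<Sum>a\<in>UNIV. \<Sum>s\<in>UNIV. w a * (gi r s * \<beta> a r * \<alpha> s))"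
    by (rule sum.cong[OF refl], rule sum.swap)
  also have "\<dots> = (\<Sum>a\<in>UNIV. \<Sum>r\<in>UNIV. \<Sum>s\<in>UNIV. w a * (gi r s * \<beta> a r * \<alpha> s))"
    by (rule sum.swap)
  finally show ?thesis unfolding coinner_def by (simp add: sum_distrib_left)
qed

lemma coinner_sum_right:
  "coinner gi \<alpha> (\<lambda>r. \<Sum>a\<in>UNIV. w a * \<beta> a r) = (\<Sum>a\<in>UNIV. w a * coinner gi \<alpha> (\<beta> a))"
proof -
  have "coinner gi \<alpha> (\<lambda>r. \<Sum>a\<in>UNIV. w a * \<beta> a r)
      = (\<Sum>r\<in>UNIV. \<Sum>s\<in>UNIV. \<Sum>a\<in>UNIV. w a * (gi r s * \<alpha> r * \<beta> a s))"
    unfolding coinner_def by (simp add: sum_distrib_left sum_distrib_right algebra_simps)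
  also have "\<dots> = (\<Sum>r\<in>UNIV. \<Sum>a\<in>UNIV. \<Sum>s\<in>UNIV. w a * (gi r s * \<alpha> r * \<beta> a s))"
    by (rule sum.cong[OF refl], rule sum.swap)
  also have "\<dots> = (\<Sum>a\<in>UNIV. \<Sum>r\<in>UNIV. \<Sum>s\<in>UNIV. w a * (gi r s * \<alpha> r * \<beta> a s))"
    by (rule sum.swap)
  finally show ?thesis unfolding coinner_def by (simp add: sum_distrib_left)
qed

lemma indicatory_lincomb:
  "indicatory y \<alpha> \<Longrightarrow> indicatory y \<beta> \<Longrightarrow> indicatory y (\<lambda>p. c * \<alpha> p + d * \<beta> p)"
  unfolding indicatory_def by (simp add: sum.distrib distrib_right mult.assoc flip: sum_distrib_left)

lemma indicatory_diff: "indicatory y \<alpha> \<Longrightarrow> indicatory y \<beta> \<Longrightarrow> indicatory y (\<lambda>a. \<alpha> a - \<beta> a)"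
  unfolding indicatory_def by (simp add: left_diff_distrib sum_subtractf)

lemma indicatory_coinner_left:
  assumes "\<And>r. (\<Sum>a\<in>UNIV. y a * \<gamma> a r) = 0"
  shows "indicatory y (\<lambda>a. coinner gi (\<gamma> a) \<beta>)"
  using coinner_sum_left[of gi y \<gamma> \<beta>] assms unfolding indicatory_def
  by (simp add: mult.commute coinner_def[of _ "\<lambda>r. 0"])

lemma indicatory_coinner_right:
  assumes "\<And>r. (\<Sum>a\<in>UNIV. y a * \<gamma> a r) = 0"
  shows "indicatory y (\<lambda>a. coinner gi \<beta> (\<gamma> a))"
  using coinner_sum_right[of gi \<beta> y \<gamma>] assms unfolding indicatory_def
  by (simp add: mult.commute coinner_def[of _ _ "\<lambda>r. 0"])

text \<open>\<open>F\<close>, \<open>l\<close>, \<open>g\<close>, \<open>gi\<close>, \<open>C\<close> stand for \<open>L\<close>, \<open>l\<^sub>i\<close>, \<open>g\<^sub>i\<^sub>j\<close>, \<open>g\<^sup>i\<^sup>j\<close>, \<open>C\<^sub>i\<^sub>j\<^sub>k\<close> evaluated at one fixed \<open>y \<noteq> 0\<close>.\<close>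

locale finsler_point =
  fixes F :: real and y l :: "'n::finite \<Rightarrow> real" and g gi :: "'n \<Rightarrow> 'n \<Rightarrow> real"
    and C :: "'n \<Rightarrow> 'n \<Rightarrow> 'n \<Rightarrow> real"
  assumes F_pos: "F > 0"
    and g_sym: "g i j = g j i"
    and gi_g: "(\<Sum>s\<in>UNIV. gi r s * g s k) = (if r = k then 1 else 0)"
    and C_swap12: "C i j k = C j i k" and C_swap23: "C i j k = C i k j"
    and C_contract_y: "(\<Sum>k\<in>UNIV. C i j k * y k) = 0"
    and g_contract_y: "(\<Sum>j\<in>UNIV. g i j * y j) = F * l i"
    and l_contract_y: "(\<Sum>i\<in>UNIV. l i * y i) = F"
begin

definition h where "h i j = g i j - l i * l j"

lemma h_sym: "h i j = h j i"
  by (simp add: h_def g_sym mult.commute)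

lemma gi_sym: "gi i j = gi j i"
proof -
  have "gi i j = (\<Sum>t\<in>UNIV. gi i t * (if j = t then 1 else 0))" by simp
  also have "\<dots> = (\<Sum>t\<in>UNIV. \<Sum>s\<in>UNIV. gi i t * (gi j s * g s t))"
    by (simp only: gi_g[symmetric] sum_distrib_left)
  also have "\<dots> = (\<Sum>s\<in>UNIV. \<Sum>t\<in>UNIV. gi i t * (gi j s * g s t))" by (rule sum.swap)
  also have "\<dots> = (\<Sum>s\<in>UNIV. gi j s * (\<Sum>t\<in>UNIV. gi i t * g t s))"
    by (simp add: sum_distrib_left g_sym ac_simps)
  also have "\<dots> = gi j i" by (simp add: gi_g)
  finally show ?thesis .
qed

lemma gi_contract_l: "(\<Sum>s\<in>UNIV. gi r s * l s) = y r / F"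
proof -
  have "F * (\<Sum>s\<in>UNIV. gi r s * l s) = (\<Sum>s\<in>UNIV. gi r s * (F * l s))"
    by (simp add: sum_distrib_left ac_simps)
  also have "\<dots> = (\<Sum>s\<in>UNIV. \<Sum>j\<in>UNIV. gi r s * (g s j * y j))"
    by (simp only: g_contract_y[symmetric] sum_distrib_left)
  also have "\<dots> = (\<Sum>j\<in>UNIV. \<Sum>s\<in>UNIV. gi r s * (g s j * y j))" by (rule sum.swap)
  also have "\<dots> = (\<Sum>j\<in>UNIV. (\<Sum>s\<in>UNIV. gi r s * g s j) * y j)"
    by (simp add: sum_distrib_right sum_distrib_left ac_simps)
  also have "\<dots> = y r" by (simp add: gi_g)
  finally show ?thesis using F_pos by (simp add: field_simps)
qed

lemma h_contract_y: "(\<Sum>j\<in>UNIV. h i j * y j) = 0"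
  by (simp add: h_def left_diff_distrib sum_subtractf g_contract_y mult.assoc l_contract_y
      flip: sum_distrib_left)

lemma gi_h: "(\<Sum>s\<in>UNIV. gi r s * h s b) = (if r = b then 1 else 0) - l b * y r / F"
proof -
  have "(\<Sum>s\<in>UNIV. gi r s * h s b) = (\<Sum>s\<in>UNIV. gi r s * g s b) - (\<Sum>s\<in>UNIV. gi r s * l s) * l b"
    by (simp add: h_def right_diff_distrib sum_subtractf sum_distrib_right sum_distrib_left ac_simps)
  then show ?thesis by (simp add: gi_g gi_contract_l)
qed

lemma trace_h: "(\<Sum>r\<in>UNIV. \<Sum>s\<in>UNIV. gi r s * h r s) = real CARD('n) - 1"
proof -
  have "(\<Sum>r\<in>UNIV. \<Sum>s\<in>UNIV. gi r s * h r s) = (\<Sum>r\<in>UNIV. \<Sum>s\<in>UNIV. gi r s * h s r)"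
    by (simp add: h_sym)
  also have "\<dots> = (\<Sum>r\<in>UNIV. (1::real) - l r * y r / F)" by (simp add: gi_h)
  also have "\<dots> = real CARD('n) - (\<Sum>r\<in>UNIV. l r * y r) / F"
    by (simp add: sum_subtractf sum_divide_distrib)
  finally show ?thesis using F_pos by (simp add: l_contract_y)
qed

lemma coinner_sym: "coinner gi \<alpha> \<beta> = coinner gi \<beta> \<alpha>"
  unfolding coinner_def by (subst sum.swap) (simp add: gi_sym ac_simps)

lemma coinner_h_right: "indicatory y \<alpha> \<Longrightarrow> coinner gi \<alpha> (\<lambda>s. h s b) = \<alpha> b"
proof -
  assume \<alpha>: "indicatory y \<alpha>"
  have "coinner gi \<alpha> (\<lambda>s. h s b) = (\<Sum>r\<in>UNIV. \<alpha> r * (\<Sum>s\<in>UNIV. gi r s * h s b))"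
    unfolding coinner_def by (simp add: sum_distrib_left ac_simps)
  also have "\<dots> = (\<Sum>r\<in>UNIV. \<alpha> r * (if r = b then 1 else 0)) - l b / F * (\<Sum>r\<in>UNIV. \<alpha> r * y r)"
    by (simp add: gi_h right_diff_distrib sum_subtractf sum_distrib_left ac_simps)
  also have "\<dots> = \<alpha> b" using \<alpha> unfolding indicatory_def by simp
  finally show ?thesis .
qed

lemma coinner_h_left: "indicatory y \<alpha> \<Longrightarrow> coinner gi (\<lambda>s. h s b) \<alpha> = \<alpha> b"
  using coinner_h_right coinner_sym by metis

lemma indicatory_h: "indicatory y (\<lambda>s. h s b)"
  unfolding indicatory_def using h_contract_y[of b] by (simp add: h_sym)

lemma indicatory_C: "indicatory y (C i j)"
  unfolding indicatory_def using C_contract_y by simp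

lemma h_kernel:
  assumes "\<And>i. (\<Sum>j\<in>UNIV. h i j * w j) = 0"
  shows "w r = ((\<Sum>c\<in>UNIV. l c * w c) / F) * y r"
proof -
  have gw: "(\<Sum>j\<in>UNIV. g i j * w j) = l i * (\<Sum>c\<in>UNIV. l c * w c)" for i
    using assms[of i] by (simp add: h_def left_diff_distrib right_diff_distrib sum_subtractf
        sum_distrib_left sum_distrib_right ac_simps)
  have "w r = (\<Sum>t\<in>UNIV. (\<Sum>s\<in>UNIV. gi r s * g s t) * w t)" by (simp add: gi_g)
  also have "\<dots> = (\<Sum>t\<in>UNIV. \<Sum>s\<in>UNIV. gi r s * (g s t * w t))"
    by (simp add: sum_distrib_right sum_distrib_left ac_simps)
  also have "\<dots> = (\<Sum>s\<in>UNIV. gi r s * (\<Sum>t\<in>UNIV. g s t * w t))"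
    by (subst sum.swap) (simp add: sum_distrib_left)
  also have "\<dots> = (\<Sum>s\<in>UNIV. gi r s * l s) * (\<Sum>c\<in>UNIV. l c * w c)"
    by (simp add: gw sum_distrib_right mult.assoc)
  also have "\<dots> = ((\<Sum>c\<in>UNIV. l c * w c) / F) * y r" by (simp add: gi_contract_l)
  finally show ?thesis .
qed

lemma h_gi_indicatory:
  assumes "indicatory y \<alpha>"
  shows "(\<Sum>j\<in>UNIV. h i j * (\<Sum>b\<in>UNIV. gi j b * \<alpha> b)) = \<alpha> i"
proof -
  have "(\<Sum>j\<in>UNIV. h i j * (\<Sum>b\<in>UNIV. gi j b * \<alpha> b)) = (\<Sum>j\<in>UNIV. \<Sum>b\<in>UNIV. h i j * gi j b * \<alpha> b)"
    by (simp add: sum_distrib_left mult.assoc)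
  also have "\<dots> = (\<Sum>b\<in>UNIV. \<Sum>j\<in>UNIV. h i j * gi j b * \<alpha> b)" by (rule sum.swap)
  also have "\<dots> = (\<Sum>b\<in>UNIV. (\<Sum>j\<in>UNIV. gi b j * h j i) * \<alpha> b)"
    by (simp add: sum_distrib_right sum_distrib_left gi_sym h_sym mult.commute)
  also have "\<dots> = (\<Sum>b\<in>UNIV. (if b = i then 1 else 0) * \<alpha> b - (l i / F) * (\<alpha> b * y b))"
    by (rule sum.cong) (auto simp: gi_h algebra_simps)
  also have "\<dots> = (\<Sum>b\<in>UNIV. (if b = i then 1 else 0) * \<alpha> b) - l i / F * (\<Sum>b\<in>UNIV. \<alpha> b * y b)"
    by (simp only: sum_subtractf sum_distrib_left)
  also have "\<dots> = \<alpha> i" using assms unfolding indicatory_def by simp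
  finally show ?thesis .
qed

end

locale angular_proportional =
  A: finsler_point F y l g gi C + B: finsler_point G y lG gG giG CG
  for F y l g gi C G lG gG giG CG +
  fixes \<rho> :: real
  assumes \<rho>_pos: "\<rho> > 0" and h_proportional: "B.h i j = \<rho> * A.h i j"
begin

lemma h_raise_difference:
  assumes "indicatory y \<alpha>"
  shows "(\<Sum>j\<in>UNIV. A.h i j * (\<rho> * (\<Sum>b\<in>UNIV. giG j b * \<alpha> b) - (\<Sum>b\<in>UNIV. gi j b * \<alpha> b))) = 0"
proof -
  have "(\<Sum>j\<in>UNIV. A.h i j * (\<rho> * (\<Sum>b\<in>UNIV. giG j b * \<alpha> b) - (\<Sum>b\<in>UNIV. gi j b * \<alpha> b)))
      = (\<Sum>j\<in>UNIV. B.h i j * (\<Sum>b\<in>UNIV. giG j b * \<alpha> b))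
        - (\<Sum>j\<in>UNIV. A.h i j * (\<Sum>b\<in>UNIV. gi j b * \<alpha> b))"
    by (simp add: h_proportional right_diff_distrib sum_subtractf ac_simps)
  also have "\<dots> = 0"
    using B.h_gi_indicatory[OF assms] A.h_gi_indicatory[OF assms] by simp
  finally show ?thesis .
qed

text \<open>Since \<open>h\<^sup>G = \<rho> h\<close>, raising an indicatory index with \<open>\<rho> g\<^sub>G\<^sup>-\<^sup>1\<close> or with \<open>g\<^sup>-\<^sup>1\<close> gives vectors
  differing by a multiple of \<open>y\<close> (\<open>h_kernel\<close>), which an indicatory tensor does not see.\<close>

lemma contract_indicatory:
  assumes Q1: "\<And>b. indicatory y (\<lambda>a. Q a b)" and Q2: "\<And>a. indicatory y (Q a)"
  shows "(\<Sum>a\<in>UNIV. \<Sum>b\<in>UNIV. giG a b * Q a b) = (\<Sum>a\<in>UNIV. \<Sum>b\<in>UNIV. gi a b * Q a b) / \<rho>"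
proof -
  define w where "w a c = \<rho> * (\<Sum>b\<in>UNIV. giG c b * Q a b) - (\<Sum>b\<in>UNIV. gi c b * Q a b)" for a c
  have w_parallel: "w a c = (\<Sum>d\<in>UNIV. l d * w a d) / F * y c" for a c
    unfolding w_def by (rule A.h_kernel[OF h_raise_difference[OF Q2]])
  have swap: "(\<Sum>a\<in>UNIV. (\<Sum>b\<in>UNIV. M b * Q a b) * y a) = (\<Sum>b\<in>UNIV. M b * (\<Sum>a\<in>UNIV. Q a b * y a))"
    for M
  proof -
    have "(\<Sum>a\<in>UNIV. (\<Sum>b\<in>UNIV. M b * Q a b) * y a) = (\<Sum>a\<in>UNIV. \<Sum>b\<in>UNIV. M b * (Q a b * y a))"
      by (simp add: sum_distrib_left sum_distrib_right ac_simps)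
    also have "\<dots> = (\<Sum>b\<in>UNIV. \<Sum>a\<in>UNIV. M b * (Q a b * y a))" by (rule sum.swap)
    finally show ?thesis by (simp add: sum_distrib_left)
  qed
  have w_y: "(\<Sum>a\<in>UNIV. w a d * y a) = 0" for d
    using Q1 unfolding w_def indicatory_def
    by (simp add: left_diff_distrib sum_subtractf swap mult.assoc flip: sum_distrib_left)
  have "(\<Sum>a\<in>UNIV. w a a) = (\<Sum>a\<in>UNIV. \<Sum>d\<in>UNIV. l d * (w a d * y a)) / F"
    by (subst w_parallel) (simp add: sum_divide_distrib sum_distrib_left sum_distrib_right ac_simps)
  also have "\<dots> = (\<Sum>d\<in>UNIV. l d * (\<Sum>a\<in>UNIV. w a d * y a)) / F"
    by (subst sum.swap) (simp add: sum_distrib_left)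
  also have "\<dots> = 0" by (simp add: w_y)
  finally have "(\<Sum>a\<in>UNIV. w a a) = 0" .
  then show ?thesis
    using \<rho>_pos unfolding w_def by (simp add: sum_subtractf field_simps flip: sum_distrib_left)
qed

lemma coinner_proportional:
  assumes \<alpha>: "indicatory y \<alpha>" and \<beta>: "indicatory y \<beta>"
  shows "coinner giG \<alpha> \<beta> = coinner gi \<alpha> \<beta> / \<rho>"
proof -
  have "(\<Sum>r\<in>UNIV. \<alpha> r * \<beta> b * y r) = \<beta> b * (\<Sum>r\<in>UNIV. \<alpha> r * y r)"
    "(\<Sum>r\<in>UNIV. \<alpha> a * \<beta> r * y r) = \<alpha> a * (\<Sum>r\<in>UNIV. \<beta> r * y r)" for a b
    by (simp_all add: sum_distrib_left ac_simps)
  with \<alpha> \<beta> have "indicatory y (\<lambda>a. \<alpha> a * \<beta> b)" "indicatory y (\<lambda>b. \<alpha> a * \<beta> b)" for a b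
    unfolding indicatory_def by simp_all
  then show ?thesis
    unfolding coinner_def using contract_indicatory[of "\<lambda>a b. \<alpha> a * \<beta> b"] by (simp add: mult.assoc)
qed

end

section \<open>The v-curvature and its contractions\<close>

definition vcurvature ::
    "('n::finite \<Rightarrow> 'n \<Rightarrow> real) \<Rightarrow> ('n \<Rightarrow> 'n \<Rightarrow> 'n \<Rightarrow> real) \<Rightarrow> 'n \<Rightarrow> 'n \<Rightarrow> 'n \<Rightarrow> 'n \<Rightarrow> real"
  where "vcurvature gi C h i j k =
    (\<Sum>r\<in>UNIV. C i j r * (\<Sum>s\<in>UNIV. gi r s * C h s k) - C i k r * (\<Sum>s\<in>UNIV. gi r s * C h s j))"

definition ricci_contraction ::
    "('n::finite \<Rightarrow> 'n \<Rightarrow> real) \<Rightarrow> ('n \<Rightarrow> 'n \<Rightarrow> 'n \<Rightarrow> 'n \<Rightarrow> real) \<Rightarrow> 'n \<Rightarrow> 'n \<Rightarrow> real"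
  where "ricci_contraction gi T i k = (\<Sum>a\<in>UNIV. \<Sum>b\<in>UNIV. gi a b * T a i b k)"

definition trace_contraction :: "('n::finite \<Rightarrow> 'n \<Rightarrow> real) \<Rightarrow> ('n \<Rightarrow> 'n \<Rightarrow> real) \<Rightarrow> real"
  where "trace_contraction gi R = (\<Sum>i\<in>UNIV. \<Sum>k\<in>UNIV. gi i k * R i k)"

definition Mtensor ::
    "('n::finite \<Rightarrow> 'n \<Rightarrow> real) \<Rightarrow> ('n \<Rightarrow> 'n \<Rightarrow> real) \<Rightarrow> ('n \<Rightarrow> 'n \<Rightarrow> 'n \<Rightarrow> 'n \<Rightarrow> real) \<Rightarrow> 'n \<Rightarrow> 'n \<Rightarrow> real"
  where "Mtensor gi hh T i j = (1 / (real CARD('n) - 3)) *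
    (ricci_contraction gi T i j
      - trace_contraction gi (ricci_contraction gi T) * hh i j / (2 * (real CARD('n) - 2)))"

definition kulkarni_nomizu :: "('n \<Rightarrow> 'n \<Rightarrow> real) \<Rightarrow> ('n \<Rightarrow> 'n \<Rightarrow> real) \<Rightarrow> 'n \<Rightarrow> 'n \<Rightarrow> 'n \<Rightarrow> 'n \<Rightarrow> real"
  where "kulkarni_nomizu hh Y a i j k = hh a k * Y i j + hh i j * Y a k - hh j a * Y i k - hh i k * Y j a"

text \<open>With this sign convention the bracket in the definition of \<open>\<eta>\<close> is \<open>S + h \<odot> M\<close>.\<close>

definition eta_tensor :: "real \<Rightarrow> ('n::finite \<Rightarrow> 'n \<Rightarrow> real) \<Rightarrow> ('n \<Rightarrow> 'n \<Rightarrow> real)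
    \<Rightarrow> ('n \<Rightarrow> 'n \<Rightarrow> 'n \<Rightarrow> 'n \<Rightarrow> real) \<Rightarrow> 'n \<Rightarrow> 'n \<Rightarrow> 'n \<Rightarrow> 'n \<Rightarrow> real"
  where "eta_tensor Fv gi hh T a i j k = (T a i j k + kulkarni_nomizu hh (Mtensor gi hh T) a i j k) / Fv"

definition indicatory4 :: "('n::finite \<Rightarrow> real) \<Rightarrow> ('n \<Rightarrow> 'n \<Rightarrow> 'n \<Rightarrow> 'n \<Rightarrow> real) \<Rightarrow> bool"
  where "indicatory4 y T \<longleftrightarrow>
    (\<forall>i j k. indicatory y (\<lambda>a. T a i j k)) \<and> (\<forall>a j k. indicatory y (\<lambda>i. T a i j k)) \<and>
    (\<forall>a i k. indicatory y (\<lambda>j. T a i j k)) \<and> (\<forall>a i j. indicatory y (\<lambda>k. T a i j k))"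

lemma ricci_contraction_lincomb:
  "ricci_contraction gi (\<lambda>a i j k. c * T1 a i j k + T2 a i j k)
    = (\<lambda>i k. c * ricci_contraction gi T1 i k + ricci_contraction gi T2 i k)"
  by (intro ext) (simp add: ricci_contraction_def sum.distrib sum_distrib_left distrib_left
      mult.left_commute)

lemma trace_contraction_lincomb:
  "trace_contraction gi (\<lambda>i k. c * R1 i k + d * R2 i k)
    = c * trace_contraction gi R1 + d * trace_contraction gi R2"
  by (simp add: trace_contraction_def sum.distrib sum_distrib_left distrib_left mult.left_commute)

lemma Mtensor_lincomb:
  "Mtensor gi hh (\<lambda>a i j k. c * T1 a i j k + T2 a i j k) i j = c * Mtensor gi hh T1 i j + Mtensor gi hh T2 i j"
  unfolding Mtensor_def ricci_contraction_lincomb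
  using trace_contraction_lincomb[of gi c _ 1] by (simp add: algebra_simps add_divide_distrib)

lemma kulkarni_nomizu_lincomb:
  "kulkarni_nomizu hh (\<lambda>p q. c * X p q + d * N p q) a i j k
    = c * kulkarni_nomizu hh X a i j k + d * kulkarni_nomizu hh N a i j k"
  unfolding kulkarni_nomizu_def by (simp add: algebra_simps)

lemma indicatory_ricci_contraction:
  assumes "indicatory4 y T"
  shows "indicatory y (\<lambda>i. ricci_contraction gi T i k)" and "indicatory y (ricci_contraction gi T i)"
proof -
  have swap3: "(\<Sum>i\<in>UNIV. \<Sum>a\<in>UNIV. \<Sum>b\<in>UNIV. f i a b) = (\<Sum>a\<in>UNIV. \<Sum>b\<in>UNIV. \<Sum>i\<in>UNIV. (f i a b :: real))"
    for f :: "'a \<Rightarrow> 'a \<Rightarrow> 'a \<Rightarrow> real"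
    by (subst sum.swap) (rule sum.cong[OF refl], rule sum.swap)
  have "(\<Sum>i\<in>UNIV. ricci_contraction gi T i k * y i)
      = (\<Sum>i\<in>UNIV. \<Sum>a\<in>UNIV. \<Sum>b\<in>UNIV. gi a b * (T a i b k * y i))"
    unfolding ricci_contraction_def by (simp add: sum_distrib_right sum_distrib_left ac_simps)
  also have "\<dots> = (\<Sum>a\<in>UNIV. \<Sum>b\<in>UNIV. gi a b * (\<Sum>i\<in>UNIV. T a i b k * y i))"
    by (subst swap3) (simp add: sum_distrib_left)
  finally show "indicatory y (\<lambda>i. ricci_contraction gi T i k)"
    using assms unfolding indicatory4_def indicatory_def by simp
  have "(\<Sum>k\<in>UNIV. ricci_contraction gi T i k * y k)
      = (\<Sum>k\<in>UNIV. \<Sum>a\<in>UNIV. \<Sum>b\<in>UNIV. gi a b * (T a i b k * y k))"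
    unfolding ricci_contraction_def by (simp add: sum_distrib_right sum_distrib_left ac_simps)
  also have "\<dots> = (\<Sum>a\<in>UNIV. \<Sum>b\<in>UNIV. gi a b * (\<Sum>k\<in>UNIV. T a i b k * y k))"
    by (subst swap3) (simp add: sum_distrib_left)
  finally show "indicatory y (ricci_contraction gi T i)"
    using assms unfolding indicatory4_def indicatory_def by simp
qed

context finsler_point
begin

lemma vcurvature_coinner: "vcurvature gi C a i j k = coinner gi (C i j) (C a k) - coinner gi (C i k) (C a j)"
proof -
  have "(\<Sum>r\<in>UNIV. C i j r * (\<Sum>s\<in>UNIV. gi r s * C a s k)) = coinner gi (C i j) (C a k)" for i j a k
    unfolding coinner_def by (simp add: sum_distrib_left C_swap23[of a _ k] ac_simps)
  then show ?thesis unfolding vcurvature_def sum_subtractf by simp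
qed

lemma C_contract_y_left: "(\<Sum>a\<in>UNIV. y a * C a b r) = 0"
proof -
  have "C a b r = C b r a" for a by (metis C_swap12 C_swap23)
  then show ?thesis using C_contract_y[of b r] by (simp add: mult.commute)
qed

lemma C_contract_y_middle: "(\<Sum>a\<in>UNIV. y a * C b a r) = 0"
  using C_contract_y_left[of b r] by (simp add: C_swap12)

lemma indicatory4_vcurvature: "indicatory4 y (vcurvature gi C)"
proof -
  have "(\<Sum>a\<in>UNIV. y a * C b r a) = 0" for b r
    using C_contract_y[of b r] by (simp add: mult.commute)
  then show ?thesis
    unfolding indicatory4_def vcurvature_coinner
    by (intro conjI allI indicatory_diff indicatory_coinner_left indicatory_coinner_right
        C_contract_y_left C_contract_y_middle)
qed

lemma ricci_contraction_kulkarni_nomizu: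
  assumes Y1: "\<And>a. indicatory y (Y a)" and Y2: "\<And>b. indicatory y (\<lambda>a. Y a b)"
  shows "ricci_contraction gi (kulkarni_nomizu h Y) i k
    = - (real CARD('n) - 3) * Y i k - trace_contraction gi Y * h i k"
proof -
  have "(\<Sum>a\<in>UNIV. \<Sum>b\<in>UNIV. gi a b * (h a k * Y i b)) = coinner gi (\<lambda>a. h a k) (Y i)"
    unfolding coinner_def by (simp add: ac_simps)
  then have t1: "(\<Sum>a\<in>UNIV. \<Sum>b\<in>UNIV. gi a b * (h a k * Y i b)) = Y i k"
    using coinner_h_left[OF Y1] by simp
  have "(\<Sum>a\<in>UNIV. \<Sum>b\<in>UNIV. gi a b * (h i b * Y a k)) = coinner gi (\<lambda>a. Y a k) (\<lambda>b. h b i)"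
    unfolding coinner_def by (simp add: ac_simps h_sym[of i])
  then have t2: "(\<Sum>a\<in>UNIV. \<Sum>b\<in>UNIV. gi a b * (h i b * Y a k)) = Y i k"
    using coinner_h_right[OF Y2] by simp
  have t3: "(\<Sum>a\<in>UNIV. \<Sum>b\<in>UNIV. gi a b * (h b a * Y i k)) = (real CARD('n) - 1) * Y i k"
    using trace_h by (simp add: sum_distrib_right sum_distrib_left h_sym ac_simps flip: trace_h)
  have t4: "(\<Sum>a\<in>UNIV. \<Sum>b\<in>UNIV. gi a b * (h i k * Y b a)) = h i k * trace_contraction gi Y"
    unfolding trace_contraction_def
    by (subst sum.swap) (simp add: sum_distrib_left gi_sym ac_simps)
  have "ricci_contraction gi (kulkarni_nomizu h Y) i k
      = (\<Sum>a\<in>UNIV. \<Sum>b\<in>UNIV. gi a b * (h a k * Y i b)) + (\<Sum>a\<in>UNIV. \<Sum>b\<in>UNIV. gi a b * (h i b * Y a k))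
        - (\<Sum>a\<in>UNIV. \<Sum>b\<in>UNIV. gi a b * (h b a * Y i k)) - (\<Sum>a\<in>UNIV. \<Sum>b\<in>UNIV. gi a b * (h i k * Y b a))"
    unfolding ricci_contraction_def kulkarni_nomizu_def by (simp add: sum.distrib sum_subtractf algebra_simps)
  then show ?thesis unfolding t1 t2 t3 t4 by (simp add: algebra_simps)
qed

lemma Mtensor_kulkarni_nomizu:
  assumes "\<And>a. indicatory y (Y a)" "\<And>b. indicatory y (\<lambda>a. Y a b)" and n: "real CARD('n) > 3"
  shows "Mtensor gi h (kulkarni_nomizu h Y) i j = - Y i j"
proof -
  have R: "ricci_contraction gi (kulkarni_nomizu h Y)
      = (\<lambda>i k. (- (real CARD('n) - 3)) * Y i k + (- trace_contraction gi Y) * h i k)"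
    using ricci_contraction_kulkarni_nomizu[OF assms(1,2)] by auto
  have trace: "trace_contraction gi h = real CARD('n) - 1"
    unfolding trace_contraction_def using trace_h by simp
  have trace_ricci: "trace_contraction gi (ricci_contraction gi (kulkarni_nomizu h Y))
      = - (2 * real CARD('n) - 4) * trace_contraction gi Y"
    unfolding R trace_contraction_lincomb trace by (simp add: algebra_simps)
  show ?thesis unfolding Mtensor_def trace_ricci unfolding R using n by (simp add: field_simps)
qed

lemma vcurvature_expand:
  assumes m: "indicatory y m"
  shows "coinner gi (\<lambda>r. \<rho> * C i j r + \<kappa> * (m j * h r i + m i * h r j + h i j * m r))
              (\<lambda>r. \<rho> * C a k r + \<kappa> * (m k * h r a + m a * h r k + h a k * m r))
       - coinner gi (\<lambda>r. \<rho> * C i k r + \<kappa> * (m k * h r i + m i * h r k + h i k * m r))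
              (\<lambda>r. \<rho> * C a j r + \<kappa> * (m j * h r a + m a * h r j + h a j * m r))
     = \<rho>\<^sup>2 * vcurvature gi C a i j k + \<rho> * \<kappa> * kulkarni_nomizu h (\<lambda>p q. coinner gi (C p q) m) a i j k
       + \<kappa>\<^sup>2 * kulkarni_nomizu h (\<lambda>p q. m p * m q + coinner gi m m / 2 * h p q) a i j k"
proof -
  have e1: "coinner gi (C p q) (\<lambda>r. h r s) = C p q s" for p q s
    by (rule coinner_h_right[OF indicatory_C])
  have e2: "coinner gi (\<lambda>r. h r s) (C p q) = C p q s" for p q s
    by (rule coinner_h_left[OF indicatory_C])
  have e3: "coinner gi (\<lambda>r. h r p) (\<lambda>r. h r q) = h p q" for p q
    using coinner_h_left[OF indicatory_h, of p q] by simp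
  have e4: "coinner gi (\<lambda>r. h r p) m = m p" for p by (rule coinner_h_left[OF m])
  have e5: "coinner gi m (\<lambda>r. h r p) = m p" for p by (rule coinner_h_right[OF m])
  have e6: "coinner gi m (C p q) = coinner gi (C p q) m" for p q by (rule coinner_sym)
  have e7: "coinner gi (C j a) m = coinner gi (C a j) m"
    using ext[of "C j a" "C a j", OF C_swap12] by simp
  have hs: "h i a = h a i" "h j a = h a j" "h k a = h a k" "h j i = h i j" "h k i = h i k" "h k j = h j k"
    by (simp_all add: h_sym)
  have cs: "C i j a = C a i j" "C a k i = C a i k" "C i k a = C a i k" "C i k j = C i j k"
    "C a j i = C a i j" "C a k j = C a j k"
    by (metis C_swap12 C_swap23)+
  show ?thesis
    unfolding vcurvature_coinner kulkarni_nomizu_def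
    apply (simp only: coinner_add_left coinner_add_right coinner_scale_left coinner_scale_right)
    apply (simp only: e1 e2 e3 e4 e5 e6 e7 hs cs)
    apply (simp add: power2_eq_square algebra_simps)
    done
qed

end

context angular_proportional
begin

lemma ricci_contraction_proportional:
  "indicatory4 y T \<Longrightarrow> ricci_contraction giG T i k = ricci_contraction gi T i k / \<rho>"
  unfolding ricci_contraction_def by (rule contract_indicatory) (auto simp: indicatory4_def)

lemma trace_contraction_proportional:
  "(\<And>k. indicatory y (\<lambda>i. R i k)) \<Longrightarrow> (\<And>i. indicatory y (R i)) \<Longrightarrow>
    trace_contraction giG R = trace_contraction gi R / \<rho>"
  unfolding trace_contraction_def by (rule contract_indicatory)

lemma Mtensor_proportional:
  assumes T: "indicatory4 y T"
  shows "Mtensor giG B.h T i j = Mtensor gi A.h T i j / \<rho>"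
proof -
  have "ricci_contraction giG T = (\<lambda>i k. ricci_contraction gi T i k / \<rho>)"
    using ricci_contraction_proportional[OF T] by auto
  moreover have "trace_contraction giG (\<lambda>i k. ricci_contraction gi T i k / \<rho>)
      = trace_contraction giG (ricci_contraction gi T) / \<rho>"
    unfolding trace_contraction_def by (simp flip: sum_divide_distrib)
  moreover have "trace_contraction giG (ricci_contraction gi T) = trace_contraction gi (ricci_contraction gi T) / \<rho>"
    by (rule trace_contraction_proportional) (rule indicatory_ricci_contraction[OF T])+
  ultimately show ?thesis
    unfolding Mtensor_def h_proportional using \<rho>_pos by (simp add: field_simps power2_eq_square)
qed

lemma vcurvature_perturbed:
  assumes m: "indicatory y m"
    and CG: "\<And>a b r. CG a b r = \<rho> * C a b r + \<kappa> * (m b * A.h r a + m a * A.h r b + A.h a b * m r)"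
  obtains Y where "\<And>p. indicatory y (Y p)" "\<And>q. indicatory y (\<lambda>p. Y p q)"
    "vcurvature giG CG = (\<lambda>a i j k. \<rho> * vcurvature gi C a i j k + kulkarni_nomizu A.h Y a i j k)"
proof
  define X where "X p q = coinner gi (C p q) m" for p q
  define N where "N p q = m p * m q + coinner gi m m / 2 * A.h p q" for p q
  show "vcurvature giG CG = (\<lambda>a i j k. \<rho> * vcurvature gi C a i j k
      + kulkarni_nomizu A.h (\<lambda>p q. \<kappa> * X p q + \<kappa>\<^sup>2 / \<rho> * N p q) a i j k)"
  proof (intro ext)
    fix a i j k
    have "vcurvature giG CG a i j k = coinner giG (CG i j) (CG a k) - coinner giG (CG i k) (CG a j)"
      by (rule B.vcurvature_coinner)
    also have "\<dots> = (coinner gi (CG i j) (CG a k) - coinner gi (CG i k) (CG a j)) / \<rho>"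
      by (simp add: coinner_proportional B.indicatory_C diff_divide_distrib)
    also have "\<dots> = (\<rho>\<^sup>2 * vcurvature gi C a i j k + \<rho> * \<kappa> * kulkarni_nomizu A.h X a i j k
        + \<kappa>\<^sup>2 * kulkarni_nomizu A.h N a i j k) / \<rho>"
      using A.vcurvature_expand[OF m, where \<rho> = \<rho> and \<kappa> = \<kappa> and i = i and j = j and a = a and k = k] unfolding X_def N_def
      by (simp add: CG[abs_def] mult.commute)
    finally show "vcurvature giG CG a i j k = \<rho> * vcurvature gi C a i j k
        + kulkarni_nomizu A.h (\<lambda>p q. \<kappa> * X p q + \<kappa>\<^sup>2 / \<rho> * N p q) a i j k"
      unfolding kulkarni_nomizu_lincomb using \<rho>_pos by (simp add: field_simps power2_eq_square)
  qed
  have X: "indicatory y (X p)" "indicatory y (\<lambda>p. X p q)" for p q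
    unfolding X_def by (intro indicatory_coinner_left A.C_contract_y_middle A.C_contract_y_left)+
  have "N p = (\<lambda>q. m p * m q + coinner gi m m / 2 * A.h q p)"
    "(\<lambda>p. N p q) = (\<lambda>p. m q * m p + coinner gi m m / 2 * A.h p q)" for p q
    unfolding N_def by (auto simp: A.h_sym ac_simps)
  moreover have "indicatory y (\<lambda>q. m p * m q + coinner gi m m / 2 * A.h q p)" for p
    by (rule indicatory_lincomb[OF m A.indicatory_h])
  ultimately have N: "indicatory y (N p)" "indicatory y (\<lambda>p. N p q)" for p q
    by simp_all
  show "indicatory y (\<lambda>q. \<kappa> * X p q + \<kappa>\<^sup>2 / \<rho> * N p q)" for p
    using X N by (intro indicatory_lincomb)
  show "indicatory y (\<lambda>p. \<kappa> * X p q + \<kappa>\<^sup>2 / \<rho> * N p q)" for q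
    using X N by (intro indicatory_lincomb)
qed

lemma Mtensor_perturbed:
  assumes SG: "indicatory4 y SG" "SG = (\<lambda>a i j k. \<rho> * T a i j k + kulkarni_nomizu A.h Y a i j k)"
    and Y: "\<And>p. indicatory y (Y p)" "\<And>q. indicatory y (\<lambda>p. Y p q)" and n: "real CARD('a) > 3"
  shows "Mtensor giG B.h SG p q = Mtensor gi A.h T p q - Y p q / \<rho>"
proof -
  have "Mtensor giG B.h SG p q = Mtensor gi A.h SG p q / \<rho>"
    by (rule Mtensor_proportional[OF SG(1)])
  also have "\<dots> = (\<rho> * Mtensor gi A.h T p q + Mtensor gi A.h (kulkarni_nomizu A.h Y) p q) / \<rho>"
    unfolding SG(2) Mtensor_lincomb ..
  also have "\<dots> = Mtensor gi A.h T p q - Y p q / \<rho>"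
    using A.Mtensor_kulkarni_nomizu[OF Y n] \<rho>_pos by (simp add: field_simps)
  finally show ?thesis .
qed

lemma eta_tensor_perturbed:
  assumes SG: "indicatory4 y SG" "SG = (\<lambda>a i j k. \<rho> * T a i j k + kulkarni_nomizu A.h Y a i j k)"
    and Y: "\<And>p. indicatory y (Y p)" "\<And>q. indicatory y (\<lambda>p. Y p q)" and n: "real CARD('a) > 3"
  shows "eta_tensor G giG B.h SG a i j k = \<rho> * F / G * eta_tensor F gi A.h T a i j k"
proof -
  have "Mtensor giG B.h SG = (\<lambda>p q. Mtensor gi A.h T p q - Y p q / \<rho>)"
    using Mtensor_perturbed[OF assms] by auto
  then show ?thesis
    unfolding eta_tensor_def kulkarni_nomizu_def h_proportional SG(2)
    using \<rho>_pos A.F_pos B.F_pos by (simp add: field_simps)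
qed

end

section \<open>The conformal \<open>\<beta>\<close>-change\<close>

lemma Scurv_eq_vcurvature: "Scurv F y = vcurvature (fund_inv F y) (cart F y)"
  by (intro ext) (simp add: Scurv_def vcurvature_def cart_up_def)

lemma Mten_eq_Mtensor: "Mten F y = Mtensor (fund_inv F y) (hang F y) (Scurv F y)"
proof -
  have "Sric F y = ricci_contraction (fund_inv F y) (Scurv F y)"
    by (intro ext) (simp add: Sric_def ricci_contraction_def)
  then show ?thesis
    by (intro ext) (simp add: Mten_def Mtensor_def Sscal_def trace_contraction_def)
qed

lemma eta_eq_eta_tensor: "eta F y h i j k = eta_tensor (F y) (fund_inv F y) (hang F y) (Scurv F y) h i j k"
  by (simp add: eta_def eta_tensor_def kulkarni_nomizu_def Mten_eq_Mtensor divide_inverse algebra_simps)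

lemma finsler_point_at:
  assumes "finsler F" "y \<noteq> 0"
  shows "finsler_point (F y) (\<lambda>i. y$i) (lvec F y) (fund F y) (fund_inv F y) (cart F y)"
proof
  show "0 < F y" by (rule finsler_pos[OF assms])
  show "fund F y i j = fund F y j i" for i j by (rule fund_sym[OF assms])
  show "(\<Sum>s\<in>UNIV. fund_inv F y r s * fund F y s k) = (if r = k then 1 else 0)" for r k
    by (rule fund_inv_left[OF assms])
  show "cart F y i j k = cart F y j i k" for i j k by (rule cart_swap12[OF assms])
  show "cart F y i j k = cart F y i k j" for i j k by (rule cart_swap23[OF assms])
  show "(\<Sum>k\<in>UNIV. cart F y i j k * y $ k) = 0" for i j by (rule cart_contract_y[OF assms])
  show "(\<Sum>j\<in>UNIV. fund F y i j * y $ j) = F y * lvec F y i" for i by (rule fund_contract_y[OF assms])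
  show "(\<Sum>i\<in>UNIV. lvec F y i * y $ i) = F y" by (rule lvec_contract_y[OF assms])
qed

context
  fixes F :: "real^'n::finite \<Rightarrow> real" and c :: real and b :: "real^'n"
  assumes finsler: "finsler F"
begin

lemma pd_beta_change: "v \<noteq> 0 \<Longrightarrow> pd i (\<lambda>y. c * F y + b \<bullet> y) v = c * pd i F v + b $ i"
  by (subst pd_add) (auto simp: pd_cmult pd_inner finsler_differentiable[OF finsler]
      intro!: derivative_intros)

lemma pd2_beta_change: "v \<noteq> 0 \<Longrightarrow> pd i (pd j (\<lambda>y. c * F y + b \<bullet> y)) v = c * pd i (pd j F) v"
proof -
  assume v: "v \<noteq> 0"
  have "pd i (pd j (\<lambda>y. c * F y + b \<bullet> y)) v = pd i (\<lambda>w. c * pd j F w + b $ j) v"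
    by (rule pd_cong_nonzero) (auto simp: v pd_beta_change)
  also have "\<dots> = c * pd i (pd j F) v"
    by (subst pd_add) (auto simp: v pd_cmult pd_const finsler_pd_differentiable[OF finsler]
        intro!: derivative_intros)
  finally show ?thesis .
qed

lemma pd3_beta_change:
  "v \<noteq> 0 \<Longrightarrow> pd k (pd i (pd j (\<lambda>y. c * F y + b \<bullet> y))) v = c * pd k (pd i (pd j F)) v"
proof -
  assume v: "v \<noteq> 0"
  have "pd k (pd i (pd j (\<lambda>y. c * F y + b \<bullet> y))) v = pd k (\<lambda>w. c * pd i (pd j F) w) v"
    by (rule pd_cong_nonzero) (auto simp: v pd2_beta_change)
  also have "\<dots> = c * pd k (pd i (pd j F)) v"
    by (auto simp: v pd_cmult finsler_pd2_differentiable[OF finsler])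
  finally show ?thesis .
qed

end

context
  fixes F :: "real^'n::finite \<Rightarrow> real" and c :: real and b :: "real^'n"
  assumes finsler: "finsler F" and finsler_change: "finsler (\<lambda>y. c * F y + b \<bullet> y)"
begin

lemma hang_beta_change:
  "y \<noteq> 0 \<Longrightarrow> hang (\<lambda>y. c * F y + b \<bullet> y) y i j = (c * (c * F y + b \<bullet> y) / F y) * hang F y i j"
  using finsler_pos[OF finsler, of y]
  by (simp add: hang_eq_pd[OF finsler_change] hang_eq_pd[OF finsler] pd2_beta_change[OF finsler])

lemma cart_beta_change:
  assumes y: "y \<noteq> 0"
  shows "cart (\<lambda>y. c * F y + b \<bullet> y) y i j k
   = (c * (c * F y + b \<bullet> y) / F y) * cart F y i j k
     + (c / (2 * F y)) * (hang F y k i * (lvec (\<lambda>y. c * F y + b \<bullet> y) y j - ((c * F y + b \<bullet> y) / F y) * lvec F y j)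
         + hang F y k j * (lvec (\<lambda>y. c * F y + b \<bullet> y) y i - ((c * F y + b \<bullet> y) / F y) * lvec F y i)
         + hang F y i j * (lvec (\<lambda>y. c * F y + b \<bullet> y) y k - ((c * F y + b \<bullet> y) / F y) * lvec F y k))"
  using finsler_pos[OF finsler y]
  by (simp only: cart_eq_pd[OF finsler_change y] cart_eq_pd[OF finsler y] pd_beta_change[OF finsler y]
      pd2_beta_change[OF finsler y] pd3_beta_change[OF finsler y] hang_eq_pd[OF finsler y] lvec_def)
    (simp add: field_simps)

lemma indicatory_lvec_beta_change:
  assumes y: "y \<noteq> 0"
  shows "indicatory (\<lambda>i. y$i) (\<lambda>a. lvec (\<lambda>y. c * F y + b \<bullet> y) y a - ((c * F y + b \<bullet> y) / F y) * lvec F y a)"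
proof -
  have "(\<Sum>a\<in>UNIV. (lvec (\<lambda>y. c * F y + b \<bullet> y) y a - ((c * F y + b \<bullet> y) / F y) * lvec F y a) * y$a)
     = (\<Sum>a\<in>UNIV. lvec (\<lambda>y. c * F y + b \<bullet> y) y a * y$a)
       - ((c * F y + b \<bullet> y) / F y) * (\<Sum>a\<in>UNIV. lvec F y a * y$a)"
    by (simp add: sum_subtractf sum_distrib_left left_diff_distrib mult.assoc)
  also have "\<dots> = 0"
    using finsler_pos[OF finsler y] by (simp add: lvec_contract_y[OF finsler_change y] lvec_contract_y[OF finsler y])
  finally show ?thesis unfolding indicatory_def .
qed

end

theorem eta_beta_change:
  fixes F :: "real^'n::finite \<Rightarrow> real" and c :: real and b :: "real^'n"
  assumes finF: "finsler F" and finG: "finsler (\<lambda>y. c * F y + b \<bullet> y)" and c: "c > 0"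
    and y: "y \<noteq> 0" and n: "CARD('n) > 3"
  shows "eta (\<lambda>y. c * F y + b \<bullet> y) y a i j k = c * eta F y a i j k"
proof -
  let ?G = "\<lambda>y. c * F y + b \<bullet> y"
  define \<rho> where "\<rho> = c * ?G y / F y"
  interpret A: finsler_point "F y" "\<lambda>i. y$i" "lvec F y" "fund F y" "fund_inv F y" "cart F y"
    by (rule finsler_point_at[OF finF y])
  interpret B: finsler_point "?G y" "\<lambda>i. y$i" "lvec ?G y" "fund ?G y" "fund_inv ?G y" "cart ?G y"
    by (rule finsler_point_at[OF finG y])
  have hA: "A.h = hang F y" and hB: "B.h = hang ?G y"
    by (intro ext; simp add: A.h_def B.h_def hang_def)+
  interpret P: angular_proportional "F y" "\<lambda>i. y$i" "lvec F y" "fund F y" "fund_inv F y" "cart F y"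
      "?G y" "lvec ?G y" "fund ?G y" "fund_inv ?G y" "cart ?G y" \<rho>
  proof
    show "0 < \<rho>" unfolding \<rho>_def using finsler_pos[OF finF y] finsler_pos[OF finG y] c by simp
    show "B.h i j = \<rho> * A.h i j" for i j
      unfolding hA hB \<rho>_def by (rule hang_beta_change[OF finF finG y])
  qed
  define m where "m a = lvec ?G y a - (?G y / F y) * lvec F y a" for a
  have CG: "cart ?G y p q r
      = \<rho> * cart F y p q r + c / (2 * F y) * (m q * A.h r p + m p * A.h r q + A.h p q * m r)" for p q r
    unfolding hA m_def \<rho>_def using cart_beta_change[OF finF finG y, of p q r] by (simp add: ac_simps)
  obtain Y where Y: "\<And>p. indicatory (\<lambda>i. y$i) (Y p)" "\<And>q. indicatory (\<lambda>i. y$i) (\<lambda>p. Y p q)"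
    and SG: "vcurvature (fund_inv ?G y) (cart ?G y)
      = (\<lambda>a i j k. \<rho> * vcurvature (fund_inv F y) (cart F y) a i j k + kulkarni_nomizu A.h Y a i j k)"
    using P.vcurvature_perturbed[OF _ CG] indicatory_lvec_beta_change[OF finF finG y]
    unfolding m_def by blast
  have "eta ?G y a i j k = \<rho> * F y / ?G y * eta F y a i j k"
    unfolding eta_eq_eta_tensor Scurv_eq_vcurvature hA[symmetric] hB[symmetric]
    by (rule P.eta_tensor_perturbed[OF B.indicatory4_vcurvature SG Y]) (use n in simp)
  then show ?thesis
    unfolding \<rho>_def using finsler_pos[OF finF y] finsler_pos[OF finG y] by simp
qed

text \<open>Everything is pointwise in \<open>x\<close>.\<close>

theorem proposition2:
  fixes L :: "real^'n::finite \<Rightarrow> real^'n \<Rightarrow> real"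
    and \<sigma> :: "real^'n \<Rightarrow> real"
    and b :: "real^'n \<Rightarrow> real^'n"
    and U :: "(real^'n) set"
  assumes "CARD('n) > 4"
    and "open U"
    and "\<forall>x\<in>U. finsler (L x)"
    and "\<forall>x\<in>U. finsler (\<lambda>y. exp (\<sigma> x) * L x y + b x \<bullet> y)"
  shows "\<forall>x\<in>U. \<forall>y. y \<noteq> 0 \<longrightarrow> (\<forall>h i j k.
           eta (\<lambda>y. exp (\<sigma> x) * L x y + b x \<bullet> y) y h i j k = exp (\<sigma> x) * eta (L x) y h i j k)"
  using assms by (auto intro!: eta_beta_change)

end
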